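(* Let $G$ be a connected graph with $\lambda_{2}(D(G))\leq\frac{17-\sqrt{329}}{2}$. Then $G$ contains none of the following graphs as an induced subgraph: the cycle $C_{4}$, the cycle $C_{5}$, the path $P_{5}$, the graph $H_{1}$ (the cycle $C_4$ with one chord added, i.e. $K_4$ minus an edge), the graph $H_{2}$ (vertices $v_1,\dots,v_5$ with edges $v_1v_2, v_2v_3, v_3v_4, v_2v_5$), and the graph $H_{3}$ (vertices $v_1,\dots,v_5$ with edges $v_1v_2, v_2v_3, v_3v_4, v_1v_5, v_2v_5$).
   Context: All graphs are simple, undirected and connected. $D(G)$ is the distance matrix of $G$ (entries are graph distances), with eigenvalues $\lambda_{1}(D(G))\geq\lambda_{2}(D(G))\geq\cdots\geq\lambda_{n}(D(G))$. *)

theory Defs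
  imports "Jordan_Normal_Form.Char_Poly" "HOL-Library.Multiset"
begin

definition simple_graph :: "nat \<Rightarrow> (nat \<Rightarrow> nat \<Rightarrow> bool) \<Rightarrow> bool" where
  "simple_graph n E \<longleftrightarrow> (\<forall>u v. E u v \<longrightarrow> u < n \<and> v < n)
     \<and> (\<forall>u v. E u v \<longrightarrow> E v u) \<and> (\<forall>u. \<not> E u u)"

(* xs is a walk from u to v of length (number of edges) length xs - 1 *)
definition is_walk :: "nat \<Rightarrow> (nat \<Rightarrow> nat \<Rightarrow> bool) \<Rightarrow> nat list \<Rightarrow> nat \<Rightarrow> nat \<Rightarrow> bool" where
  "is_walk n E xs u v \<longleftrightarrow> xs \<noteq> [] \<and> hd xs = u \<and> last xs = v \<and> set xs \<subseteq> {0..<n}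
     \<and> (\<forall>i. i + 1 < length xs \<longrightarrow> E (xs ! i) (xs ! (i + 1)))"

definition connected_graph :: "nat \<Rightarrow> (nat \<Rightarrow> nat \<Rightarrow> bool) \<Rightarrow> bool" where
  "connected_graph n E \<longleftrightarrow> n \<ge> 1 \<and> (\<forall>u<n. \<forall>v<n. \<exists>xs. is_walk n E xs u v)"

definition graph_dist :: "nat \<Rightarrow> (nat \<Rightarrow> nat \<Rightarrow> bool) \<Rightarrow> nat \<Rightarrow> nat \<Rightarrow> nat" where
  "graph_dist n E u v = (LEAST d. \<exists>xs. is_walk n E xs u v \<and> length xs = d + 1)"

definition dist_matrix :: "nat \<Rightarrow> (nat \<Rightarrow> nat \<Rightarrow> bool) \<Rightarrow> real mat" where
  "dist_matrix n E = mat n n (\<lambda>(i, j). real (graph_dist n E i j))"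

(* eigenvalues with algebraic multiplicity, in non-increasing order;
   eig_desc A ! (k - 1) is lambda_k(A) (1-indexed) *)
definition eig_desc :: "real mat \<Rightarrow> real list" where
  "eig_desc A = rev (sorted_list_of_multiset (proots (char_poly A)))"

definition lambda_k :: "nat \<Rightarrow> real mat \<Rightarrow> real" where
  "lambda_k k A = eig_desc A ! (k - 1)"

definition induced_subgraph_of ::
  "nat \<Rightarrow> (nat \<Rightarrow> nat \<Rightarrow> bool) \<Rightarrow> nat \<Rightarrow> (nat \<Rightarrow> nat \<Rightarrow> bool) \<Rightarrow> bool" where
  "induced_subgraph_of k EH n E \<longleftrightarrow> (\<exists>f. inj_on f {0..<k} \<and> f ` {0..<k} \<subseteq> {0..<n}
     \<and> (\<forall>i<k. \<forall>j<k. E (f i) (f j) \<longleftrightarrow> EH i j))"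

definition edges_of :: "(nat \<times> nat) list \<Rightarrow> nat \<Rightarrow> nat \<Rightarrow> bool" where
  "edges_of es i j \<longleftrightarrow> (i, j) \<in> set es \<or> (j, i) \<in> set es"

(* the forbidden graphs; v_1..v_5 of the paper are 0..4 *)
definition C4 where "C4 = edges_of [(0,1),(1,2),(2,3),(3,0)]"
definition C5 where "C5 = edges_of [(0,1),(1,2),(2,3),(3,4),(4,0)]"
definition P5 where "P5 = edges_of [(0,1),(1,2),(2,3),(3,4)]"
definition H1 where "H1 = edges_of [(0,1),(1,2),(2,3),(3,0),(0,2)]"
definition H2 where "H2 = edges_of [(0,1),(1,2),(2,3),(1,4)]"
definition H3 where "H3 = edges_of [(0,1),(1,2),(2,3),(0,4),(1,4)]"

end

theory Submission
  imports Defs "Jordan_Normal_Form.Schur_Decomposition"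
begin

(* If the quadratic form of a real symmetric matrix exceeds c on some plane, the matrix has two
   eigenvalues above c (diagonalise orthogonally and take the point of the plane orthogonal to the
   eigenvector of the top eigenvalue). For an induced copy of one of the six graphs, the distances
   in G between its vertices are 1 on its edges, 2 on pairs with a common neighbour, and otherwise
   at least 2 and at most the length of a path in the copy; in each of the resulting finitely many
   cases two integer vectors supported on the copy exhibit such a plane for c = -569/1000, which
   is slightly above (17 - sqrt 329) / 2 = -0.56918... *)

section \<open>Real symmetric matrices\<close>

lemma real_symmetric_complex_eigenvalue_real:
  fixes A :: "real mat"
  assumes A: "A \<in> carrier_mat n n" and sym: "transpose_mat A = A"
    and ev: "eigenvector (map_mat complex_of_real A) x a"
  shows "cnj a = a"
proof -
  let ?C = "map_mat complex_of_real A"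
  have x: "x \<in> carrier_vec n" and x0: "x \<noteq> 0\<^sub>v n" and Cx: "?C *\<^sub>v x = a \<cdot>\<^sub>v x"
    using ev A unfolding eigenvector_def by auto
  have symij: "A $$ (i, j) = A $$ (j, i)" if "i < n" "j < n" for i j
    using arg_cong[OF sym, of "\<lambda>M. M $$ (i, j)"] that A by auto
  have Cxi: "(\<Sum>j<n. complex_of_real (A $$ (i, j)) * x $ j) = a * x $ i" if "i < n" for i
  proof -
    have "(?C *\<^sub>v x) $ i = (\<Sum>j<n. complex_of_real (A $$ (i, j)) * x $ j)"
      using that x A by (auto simp: scalar_prod_def atLeast0LessThan)
    then show ?thesis using Cx that x by simp
  qed
  \<comment> \<open>s = x^H A x equals both a t and its own conjugate, where t = x^H x > 0.\<close>
  define s where "s = (\<Sum>i<n. cnj (x $ i) * (\<Sum>j<n. complex_of_real (A $$ (i, j)) * x $ j))"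
  define t where "t = (\<Sum>i<n. cnj (x $ i) * x $ i)"
  have "s = (\<Sum>i<n. cnj (x $ i) * (a * x $ i))"
    unfolding s_def by (rule sum.cong) (simp_all add: Cxi)
  then have s_a: "s = a * t" unfolding t_def by (simp add: sum_distrib_left mult_ac)
  have "cnj s = (\<Sum>i<n. \<Sum>j<n. x $ i * complex_of_real (A $$ (i, j)) * cnj (x $ j))"
    unfolding s_def by (simp add: sum_distrib_left mult_ac)
  also have "\<dots> = (\<Sum>j<n. \<Sum>i<n. x $ i * complex_of_real (A $$ (i, j)) * cnj (x $ j))"
    by (rule sum.swap)
  also have "\<dots> = s" unfolding s_def sum_distrib_left
    by (intro sum.cong refl) (auto simp: symij mult_ac)
  finally have s_real: "cnj s = s" .
  have t_real: "cnj t = t" unfolding t_def by (simp add: mult.commute)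
  obtain i where i: "i < n" "x $ i \<noteq> 0"
    using x x0 by (metis eq_vecI carrier_vecD index_zero_vec(1,2))
  have "t = complex_of_real (\<Sum>i<n. (cmod (x $ i))\<^sup>2)"
    unfolding t_def of_real_sum by (rule sum.cong[OF refl]) (metis complex_norm_square mult.commute)
  moreover have "(\<Sum>i<n. (cmod (x $ i))\<^sup>2) > 0"
    using i by (intro sum_pos2[of _ i]) auto
  ultimately have "t \<noteq> 0" by (metis of_real_eq_0_iff less_irrefl)
  moreover have "a * t = cnj a * t" using s_a s_real t_real by (metis complex_cnj_mult)
  ultimately show ?thesis by simp
qed

lemma real_symmetric_eigenvalue_exists:
  fixes A :: "real mat"
  assumes A: "A \<in> carrier_mat n n" and sym: "transpose_mat A = A" and n: "n > 0"
  shows "\<exists>e. eigenvalue A e"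
proof -
  let ?C = "map_mat complex_of_real A"
  have C: "?C \<in> carrier_mat n n" using A by simp
  obtain as where cp: "char_poly ?C = (\<Prod>a\<leftarrow>as. [:-a, 1:])" and "length as = n"
    using char_poly_factorized[OF C] by blast
  then obtain a where "a \<in> set as" using n by (cases as) auto
  then have root: "poly (char_poly ?C) a = 0" unfolding cp by (simp add: poly_prod_list_zero_iff)
  then obtain x where "eigenvector ?C x a"
    using eigenvalue_root_char_poly[OF C] unfolding eigenvalue_def by blast
  then have "cnj a = a" by (rule real_symmetric_complex_eigenvalue_real[OF A sym])
  then have "a = complex_of_real (Re a)" by (simp add: complex_eq_iff)
  then have "poly (char_poly ?C) (complex_of_real (Re a)) = 0" using root by simp
  moreover have "char_poly ?C = map_poly complex_of_real (char_poly A)"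
    by (rule of_real_hom.char_poly_hom[OF A])
  ultimately have "poly (char_poly A) (Re a) = 0" by simp
  then show ?thesis using eigenvalue_root_char_poly[OF A] by blast
qed

lemma orthonormal_completion:
  fixes u :: "real vec"
  assumes u: "u \<in> carrier_vec n" and uu: "u \<bullet> u = 1"
  shows "\<exists>W \<in> carrier_mat n n. transpose_mat W * W = 1\<^sub>m n \<and> col W 0 = u"
proof -
  have u0: "u \<noteq> 0\<^sub>v n" using uu u by auto
  interpret cof_vec_space n "TYPE(real)" .
  define b where "b = basis_completion u"
  note bc = basis_completion[OF u u0, folded b_def]
  define ws where "ws = gram_schmidt n b"
  from gram_schmidt_result[OF bc(2) bc(4) bc(5) ws_def]
  have ws: "corthogonal ws" "set ws \<subseteq> carrier_vec n" "length ws = n" using bc(6) by auto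
  have "n \<noteq> 0" using bc(6) bc(7) u0 u by (cases b) auto
  then obtain vs where "b = u # vs" using bc(6) bc(7) by (cases b) auto
  then have "hd ws = u" unfolding ws_def using u by simp
  then have ws0: "ws ! 0 = u" using ws(3) \<open>n \<noteq> 0\<close> by (cases ws) auto
  have wsi: "ws ! i \<in> carrier_vec n" if "i < n" for i using ws that by auto
  have pos: "ws ! i \<bullet> ws ! i > 0" if "i < n" for i
  proof -
    have "ws ! i \<bullet> ws ! i \<noteq> 0" using corthogonalD[OF ws(1), of i i] that ws(3) by simp
    moreover have "ws ! i \<bullet> ws ! i \<ge> 0" using wsi[OF that]
      by (simp add: scalar_prod_def sum_nonneg)
    ultimately show ?thesis by simp
  qed
  have orth: "ws ! i \<bullet> ws ! j = 0" if "i < n" "j < n" "i \<noteq> j" for i j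
    using corthogonalD[OF ws(1), of i j] that ws(3) by simp
  define W where "W = mat_of_cols n (map (\<lambda>w. (1 / sqrt (w \<bullet> w)) \<cdot>\<^sub>v w) ws)"
  have W: "W \<in> carrier_mat n n"
    unfolding W_def using mat_of_cols_carrier(1)[of n "map (\<lambda>w. (1 / sqrt (w \<bullet> w)) \<cdot>\<^sub>v w) ws"] ws(3) by simp
  have colW: "col W i = (1 / sqrt (ws ! i \<bullet> ws ! i)) \<cdot>\<^sub>v (ws ! i)" if "i < n" for i
    unfolding W_def using that ws(3) wsi[OF that] by simp
  have "transpose_mat W * W = 1\<^sub>m n"
  proof (rule eq_matI)
    fix i j assume "i < dim_row (1\<^sub>m n)" and "j < dim_col (1\<^sub>m n)"
    then have i: "i < n" and j: "j < n" by auto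
    have "(transpose_mat W * W) $$ (i, j)
        = (1 / sqrt (ws ! i \<bullet> ws ! i)) * (1 / sqrt (ws ! j \<bullet> ws ! j)) * (ws ! i \<bullet> ws ! j)"
      using i j W colW wsi[OF i] wsi[OF j] by simp
    also have "\<dots> = 1\<^sub>m n $$ (i, j)"
    proof (cases "i = j")
      case True
      have "sqrt (ws ! i \<bullet> ws ! i) * sqrt (ws ! i \<bullet> ws ! i) = ws ! i \<bullet> ws ! i"
        using pos[OF i] by simp
      then show ?thesis using True i pos[OF i] by (simp add: field_simps)
    next
      case False then show ?thesis using orth[OF i j] i j by simp
    qed
    finally show "(transpose_mat W * W) $$ (i, j) = 1\<^sub>m n $$ (i, j)" .
  qed (use W in auto)
  moreover have "col W 0 = u" using colW[of 0] ws0 \<open>n \<noteq> 0\<close> uu by simp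
  ultimately show ?thesis using W by blast
qed

lemma mult_four_block_diag:
  fixes A1 :: "'a::comm_ring_1 mat"
  assumes "A1 \<in> carrier_mat 1 1" "A2 \<in> carrier_mat 1 1" "B1 \<in> carrier_mat m m" "B2 \<in> carrier_mat m m"
  shows "four_block_mat A1 (0\<^sub>m 1 m) (0\<^sub>m m 1) B1 * four_block_mat A2 (0\<^sub>m 1 m) (0\<^sub>m m 1) B2
    = four_block_mat (A1 * A2) (0\<^sub>m 1 m) (0\<^sub>m m 1) (B1 * B2)"
  using assms by (subst mult_four_block_mat) (auto intro: cong_four_block_mat)

text \<open>An orthonormal basis starting with a unit eigenvector splits off a 1 x 1 block.\<close>

lemma real_symmetric_deflation:
  fixes A :: "real mat"
  assumes A: "A \<in> carrier_mat (Suc m) (Suc m)" and sym: "transpose_mat A = A"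
  shows "\<exists>W e A3. W \<in> carrier_mat (Suc m) (Suc m) \<and> transpose_mat W * W = 1\<^sub>m (Suc m)
    \<and> A3 \<in> carrier_mat m m \<and> transpose_mat A3 = A3
    \<and> transpose_mat W * A * W = four_block_mat (mat 1 1 (\<lambda>_. e)) (0\<^sub>m 1 m) (0\<^sub>m m 1) A3"
proof -
  let ?n = "Suc m"
  obtain e where "eigenvalue A e" using real_symmetric_eigenvalue_exists[OF A sym] by auto
  then obtain v where "eigenvector A v e" using find_eigenvector[OF A] by blast
  then have v: "v \<in> carrier_vec ?n" and v0: "v \<noteq> 0\<^sub>v ?n" and Av: "A *\<^sub>v v = e \<cdot>\<^sub>v v"
    unfolding eigenvector_def using A by auto
  have vv: "v \<bullet> v > 0" using v v0 by (metis conjugate_square_greater_0_vec vec_conjugate_real)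
  define u where "u = (1 / sqrt (v \<bullet> v)) \<cdot>\<^sub>v v"
  have u: "u \<in> carrier_vec ?n" unfolding u_def using v by simp
  have "u \<bullet> u = 1" unfolding u_def using v vv by (simp add: field_simps)
  then obtain W where W: "W \<in> carrier_mat ?n ?n" and WW: "transpose_mat W * W = 1\<^sub>m ?n"
    and Wu: "col W 0 = u" using orthonormal_completion[OF u] by blast
  have Au: "A *\<^sub>v u = e \<cdot>\<^sub>v u" unfolding u_def using mult_mat_vec[OF A v] Av v
    by (simp add: smult_smult_assoc mult.commute)
  define A' where "A' = transpose_mat W * A * W"
  have A': "A' \<in> carrier_mat ?n ?n" unfolding A'_def using W A by simp
  have symA': "transpose_mat A' = A'"
    unfolding A'_def using W A sym
    by (simp add: transpose_mult[of _ ?n ?n _ ?n] assoc_mult_mat[of _ ?n ?n _ ?n _ ?n])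
  have col_AW: "col (A * W) 0 = A *\<^sub>v col W 0"
    using W A by (intro col_mult2[of _ ?n ?n _ ?n]) auto
  have "col A' 0 = col (transpose_mat W * (A * W)) 0"
    unfolding A'_def using W A by (simp add: assoc_mult_mat[of _ ?n ?n _ ?n _ ?n])
  also have "\<dots> = transpose_mat W *\<^sub>v col (A * W) 0"
    using W A by (intro col_mult2[of _ ?n ?n _ ?n]) auto
  also have "\<dots> = transpose_mat W *\<^sub>v (A *\<^sub>v col W 0)" by (simp only: col_AW)
  also have "\<dots> = e \<cdot>\<^sub>v (transpose_mat W *\<^sub>v col W 0)"
    using W Au Wu u by (simp add: mult_mat_vec)
  also have "transpose_mat W *\<^sub>v col W 0 = col (transpose_mat W * W) 0"
    using W by (intro col_mult2[symmetric, of _ ?n ?n _ ?n]) auto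
  finally have colA': "col A' 0 = e \<cdot>\<^sub>v unit_vec ?n 0" using WW by simp
  have A'i0: "A' $$ (i, 0) = (if i = 0 then e else 0)" if "i < ?n" for i
    using arg_cong[OF colA', of "\<lambda>x. x $ i"] that A' by auto
  have A'0j: "A' $$ (0, j) = (if j = 0 then e else 0)" if "j < ?n" for j
    using arg_cong[OF symA', of "\<lambda>M. M $$ (j, 0)"] A'i0[OF that] that A' by auto
  define A3 where "A3 = mat m m (\<lambda>(i, j). A' $$ (Suc i, Suc j))"
  have "transpose_mat A3 = A3"
  proof (rule eq_matI)
    fix i j assume "i < dim_row A3" "j < dim_col A3"
    then have "Suc i < ?n" "Suc j < ?n" by (auto simp: A3_def)
    then show "transpose_mat A3 $$ (i, j) = A3 $$ (i, j)"
      using arg_cong[OF symA', of "\<lambda>M. M $$ (Suc i, Suc j)"] A' by (simp add: A3_def)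
  qed (auto simp: A3_def)
  moreover have "A' = four_block_mat (mat 1 1 (\<lambda>_. e)) (0\<^sub>m 1 m) (0\<^sub>m m 1) A3"
    using A' A'i0 A'0j by (intro eq_matI) (auto simp: A3_def)
  moreover have "A3 \<in> carrier_mat m m" unfolding A3_def by simp
  ultimately show ?thesis using W WW unfolding A'_def by blast
qed

theorem real_symmetric_orthogonally_diagonalizable:
  fixes A :: "real mat"
  assumes "A \<in> carrier_mat n n" "transpose_mat A = A"
  shows "\<exists>P D. P \<in> carrier_mat n n \<and> transpose_mat P * P = 1\<^sub>m n
     \<and> transpose_mat P * A * P = D \<and> diagonal_mat D"
  using assms
proof (induction n arbitrary: A)
  case 0
  then show ?case by (intro exI[of _ "1\<^sub>m 0"]) (auto simp: diagonal_mat_def)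
next
  case (Suc m)
  let ?n = "Suc m"
  obtain W e A3 where W: "W \<in> carrier_mat (Suc m) (Suc m)" "transpose_mat W * W = 1\<^sub>m (Suc m)"
    and A3: "A3 \<in> carrier_mat m m" "transpose_mat A3 = A3"
    and WAW: "transpose_mat W * A * W = four_block_mat (mat 1 1 (\<lambda>_. e)) (0\<^sub>m 1 m) (0\<^sub>m m 1) A3"
    using real_symmetric_deflation[OF Suc.prems] by blast
  obtain P3 D3 where P3: "P3 \<in> carrier_mat m m" "transpose_mat P3 * P3 = 1\<^sub>m m"
    and D3: "transpose_mat P3 * A3 * P3 = D3" "diagonal_mat D3"
    using Suc.IH[OF A3] by blast
  define X where "X = four_block_mat (1\<^sub>m 1) (0\<^sub>m 1 m) (0\<^sub>m m 1) P3"
  have X: "X \<in> carrier_mat (Suc m) (Suc m)" unfolding X_def using P3 by auto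
  have Xt: "transpose_mat X = four_block_mat (1\<^sub>m 1) (0\<^sub>m 1 m) (0\<^sub>m m 1) (transpose_mat P3)"
    unfolding X_def using P3 by (subst transpose_four_block_mat) auto
  have XX: "transpose_mat X * X = 1\<^sub>m (Suc m)"
    unfolding Xt unfolding X_def using P3 by (subst mult_four_block_diag) auto
  have "transpose_mat X * (transpose_mat W * A * W)
      = four_block_mat (mat 1 1 (\<lambda>_. e)) (0\<^sub>m 1 m) (0\<^sub>m m 1) (transpose_mat P3 * A3)"
    unfolding WAW Xt using P3 A3 by (subst mult_four_block_diag) auto
  then have "transpose_mat X * (transpose_mat W * A * W) * X
      = four_block_mat (mat 1 1 (\<lambda>_. e)) (0\<^sub>m 1 m) (0\<^sub>m m 1) (transpose_mat P3 * A3) * X"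
    by simp
  also have "\<dots> = four_block_mat (mat 1 1 (\<lambda>_. e)) (0\<^sub>m 1 m) (0\<^sub>m m 1) D3"
    unfolding X_def using P3 A3 D3 by (subst mult_four_block_diag) auto
  finally have XBX: "transpose_mat X * (transpose_mat W * A * W) * X
      = four_block_mat (mat 1 1 (\<lambda>_. e)) (0\<^sub>m 1 m) (0\<^sub>m m 1) D3" .
  have PtP: "transpose_mat (W * X) * (W * X) = transpose_mat X * (transpose_mat W * W) * X"
    using W(1) X by (simp add: transpose_mult[of _ ?n ?n _ ?n] assoc_mult_mat[of _ ?n ?n _ ?n _ ?n])
  have PtAP: "transpose_mat (W * X) * A * (W * X) = transpose_mat X * (transpose_mat W * A * W) * X"
    using W(1) X Suc.prems(1)
    by (simp add: transpose_mult[of _ ?n ?n _ ?n] assoc_mult_mat[of _ ?n ?n _ ?n _ ?n])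
  have "diagonal_mat (four_block_mat (mat 1 1 (\<lambda>_. e)) (0\<^sub>m 1 m) (0\<^sub>m m 1) D3)"
    using D3 A3 P3 unfolding diagonal_mat_def by auto
  moreover have "transpose_mat (W * X) * (W * X) = 1\<^sub>m ?n" using PtP W X XX by simp
  moreover have "W * X \<in> carrier_mat ?n ?n" using W X by simp
  ultimately show ?case using PtAP XBX by auto
qed


lemma proots_prod_list_linear: "proots (\<Prod>a\<leftarrow>as. [:- a, 1:]) = mset (as :: real list)"
proof (induction as)
  case (Cons a as)
  have "(\<Prod>a\<leftarrow>as. [:- a, 1:]) \<noteq> (0 :: real poly)" by (auto simp: prod_list_zero_iff)
  then have "proots ([:-a, 1:] * (\<Prod>a\<leftarrow>as. [:- a, 1:]))
      = proots [:-a, 1:] + proots (\<Prod>a\<leftarrow>as. [:- a, 1:])"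
    by (intro proots_mult) auto
  then show ?case unfolding prod_list.Cons Cons.IH using proots_linear_factor[of "-a"] by simp
qed simp

lemma orthogonal_similarity:
  fixes A :: "real mat"
  assumes A: "A \<in> carrier_mat n n" and P: "P \<in> carrier_mat n n"
    and PP: "transpose_mat P * P = 1\<^sub>m n" and PAP: "transpose_mat P * A * P = D"
  shows "P * transpose_mat P = 1\<^sub>m n" and "A = P * D * transpose_mat P"
proof -
  have Pt: "transpose_mat P \<in> carrier_mat n n" using P by simp
  show PP': "P * transpose_mat P = 1\<^sub>m n" using mat_mult_left_right_inverse[OF Pt P] PP by simp
  have "P * D * transpose_mat P = (P * transpose_mat P) * A * (P * transpose_mat P)"
    unfolding PAP[symmetric] using P Pt A by (simp add: assoc_mult_mat[of _ n n _ n _ n])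
  then show "A = P * D * transpose_mat P" using PP' A by simp
qed

lemma eig_desc_orthogonal_diagonal:
  fixes A :: "real mat"
  assumes A: "A \<in> carrier_mat n n" and P: "P \<in> carrier_mat n n"
    and PP: "transpose_mat P * P = 1\<^sub>m n" and PAP: "transpose_mat P * A * P = D"
    and diag: "diagonal_mat D"
  shows "eig_desc A = rev (sort (diag_mat D))"
proof -
  have D: "D \<in> carrier_mat n n" using PAP P A by auto
  have "similar_mat_wit A D P (transpose_mat P)"
    using A P D PP orthogonal_similarity[OF A P PP PAP] by (auto simp: similar_mat_wit_def Let_def)
  then have sim: "similar_mat A D" unfolding similar_mat_def by blast
  have "upper_triangular D" using diag D unfolding diagonal_mat_def upper_triangular_def by auto
  then have cp: "char_poly A = (\<Prod>a\<leftarrow>diag_mat D. [:- a, 1:])"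
    unfolding char_poly_similar[OF sim] by (rule char_poly_upper_triangular[OF D])
  show ?thesis unfolding eig_desc_def cp proots_prod_list_linear by simp
qed

lemma second_largest_gt:
  fixes ds :: "real list"
  assumes "i < length ds" "j < length ds" "i \<noteq> j" "c < ds ! i" "c < ds ! j"
  shows "c < rev (sort ds) ! 1"
proof (rule ccontr)
  let ?s = "sort ds" and ?n = "length ds"
  assume "\<not> c < rev ?s ! 1"
  moreover have n2: "?n \<ge> 2" using assms by linarith
  ultimately have "?s ! (?n - 2) \<le> c" by (simp add: rev_nth numeral_2_eq_2)
  then have small: "?s ! k \<le> c" if "k \<le> ?n - 2" for k
  proof -
    have "?s ! k \<le> ?s ! (?n - 2)" using n2 by (intro sorted_nth_mono[OF sorted_sort that]) simp
    then show ?thesis using \<open>?s ! (?n - 2) \<le> c\<close> by linarith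
  qed
  have "length (filter (\<lambda>x. c < x) ds) = length (filter (\<lambda>x. c < x) ?s)"
    by (metis mset_filter mset_sort size_mset)
  also have "\<dots> = card {k. k < ?n \<and> c < ?s ! k}" by (simp add: length_filter_conv_card)
  also have "\<dots> \<le> card {?n - 1}"
  proof (rule card_mono)
    show "{k. k < ?n \<and> c < ?s ! k} \<subseteq> {?n - 1}"
    proof
      fix k assume k: "k \<in> {k. k < ?n \<and> c < ?s ! k}"
      then have "\<not> k \<le> ?n - 2" using small[of k] by force
      then show "k \<in> {?n - 1}" using k by auto
    qed
  qed simp
  finally have "length (filter (\<lambda>x. c < x) ds) \<le> 1" by simp
  moreover have "card {i, j} \<le> card {k. k < ?n \<and> c < ds ! k}"
    using assms by (intro card_mono) auto
  ultimately show False using assms(3) by (simp add: length_filter_conv_card)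
qed

lemma orthogonal_change_quadratic_form:
  fixes A :: "real mat"
  assumes A: "A \<in> carrier_mat n n" and P: "P \<in> carrier_mat n n"
    and PP: "transpose_mat P * P = 1\<^sub>m n" and PAP: "transpose_mat P * A * P = D"
    and x: "x \<in> carrier_vec n"
  shows "x \<bullet> (A *\<^sub>v x) = (transpose_mat P *\<^sub>v x) \<bullet> (D *\<^sub>v (transpose_mat P *\<^sub>v x))"
    and "x \<bullet> x = (transpose_mat P *\<^sub>v x) \<bullet> (transpose_mat P *\<^sub>v x)"
proof -
  let ?y = "transpose_mat P *\<^sub>v x"
  have Pt: "transpose_mat P \<in> carrier_mat n n" using P by simp
  have D: "D \<in> carrier_mat n n" using PAP P A by auto
  have y: "?y \<in> carrier_vec n" using Pt x by simp
  have "A *\<^sub>v x = P * D * transpose_mat P *\<^sub>v x"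
    by (simp only: orthogonal_similarity(2)[OF A P PP PAP, symmetric])
  also have "\<dots> = (P * D) *\<^sub>v ?y"
    using P D Pt x by (intro assoc_mult_mat_vec[of _ n n]) auto
  also have "\<dots> = P *\<^sub>v (D *\<^sub>v ?y)"
    using P D y by (intro assoc_mult_mat_vec[of _ n n]) auto
  finally have "x \<bullet> (A *\<^sub>v x) = x \<bullet> (P *\<^sub>v (D *\<^sub>v ?y))" by simp
  also have "\<dots> = ?y \<bullet> (D *\<^sub>v ?y)"
    using D x y by (intro transpose_vec_mult_scalar[OF P, symmetric]) auto
  finally show "x \<bullet> (A *\<^sub>v x) = ?y \<bullet> (D *\<^sub>v ?y)" .
  have "P *\<^sub>v ?y = (P * transpose_mat P) *\<^sub>v x"
    using P Pt x by (intro assoc_mult_mat_vec[symmetric, of _ n n]) auto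
  then have "x \<bullet> x = x \<bullet> (P *\<^sub>v ?y)"
    using orthogonal_similarity(1)[OF A P PP PAP] x by simp
  also have "\<dots> = ?y \<bullet> ?y"
    using x y by (intro transpose_vec_mult_scalar[OF P, symmetric])
  finally show "x \<bullet> x = ?y \<bullet> ?y" .
qed

lemma diagonal_quadratic_form_le:
  fixes D :: "real mat"
  assumes D: "D \<in> carrier_mat n n" and diag: "diagonal_mat D" and y: "y \<in> carrier_vec n"
    and small: "\<And>i. i < n \<Longrightarrow> D $$ (i, i) \<le> c \<or> y $ i = 0"
  shows "y \<bullet> (D *\<^sub>v y) \<le> c * (y \<bullet> y)"
proof -
  have Dy: "(D *\<^sub>v y) $ i = D $$ (i, i) * y $ i" if "i < n" for i
  proof -
    have "(D *\<^sub>v y) $ i = (\<Sum>j\<in>{0..<n}. D $$ (i, j) * y $ j)"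
      using D y that by (simp add: scalar_prod_def)
    also have "\<dots> = (\<Sum>j\<in>{0..<n}. if j = i then D $$ (i, i) * y $ i else 0)"
      using diag D that by (intro sum.cong) (auto simp: diagonal_mat_def)
    finally show ?thesis using that by simp
  qed
  have "y \<bullet> (D *\<^sub>v y) = (\<Sum>i\<in>{0..<n}. D $$ (i, i) * (y $ i)\<^sup>2)"
    unfolding scalar_prod_def using D y Dy
    by (intro sum.cong) (simp_all del: index_mult_mat_vec add: power2_eq_square)
  also have "\<dots> \<le> (\<Sum>i\<in>{0..<n}. c * (y $ i)\<^sup>2)"
    using small by (intro sum_mono) (fastforce intro: mult_right_mono)
  also have "\<dots> = c * (y \<bullet> y)"
    unfolding scalar_prod_def using y by (simp add: sum_distrib_left power2_eq_square)
  finally show ?thesis .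
qed

lemma all_but_one_eigenvalue_le:
  fixes A :: "real mat"
  assumes A: "A \<in> carrier_mat n n" and P: "P \<in> carrier_mat n n"
    and PP: "transpose_mat P * P = 1\<^sub>m n" and PAP: "transpose_mat P * A * P = D"
    and diag: "diagonal_mat D" and lambda2: "lambda_k 2 A \<le> c"
  obtains i0 where "\<And>i. i < n \<Longrightarrow> i \<noteq> i0 \<Longrightarrow> D $$ (i, i) \<le> c"
proof (cases "\<exists>i<n. c < D $$ (i, i)")
  case True
  then obtain i0 where i0: "i0 < n" "c < D $$ (i0, i0)" by blast
  have D: "D \<in> carrier_mat n n" using PAP P A by auto
  have ds: "length (diag_mat D) = n" "\<And>i. i < n \<Longrightarrow> diag_mat D ! i = D $$ (i, i)"
    using D by (auto simp: diag_mat_def)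
  have "D $$ (i, i) \<le> c" if "i < n" "i \<noteq> i0" for i
    using second_largest_gt[of i "diag_mat D" i0 c] lambda2 that i0 ds
    unfolding lambda_k_def eig_desc_orthogonal_diagonal[OF A P PP PAP diag] by force
  then show ?thesis using that by blast
next
  case False
  then show ?thesis using that by force
qed

text \<open>The easy half of the Courant-Fischer principle for the second eigenvalue.\<close>

theorem lambda2_gt_if_plane_form_gt:
  fixes A :: "real mat"
  assumes A: "A \<in> carrier_mat n n" and sym: "transpose_mat A = A"
    and v1: "v1 \<in> carrier_vec n" and v2: "v2 \<in> carrier_vec n"
    and form_gt: "\<And>a b. (a, b) \<noteq> (0, 0) \<Longrightarrow>
      c * ((a \<cdot>\<^sub>v v1 + b \<cdot>\<^sub>v v2) \<bullet> (a \<cdot>\<^sub>v v1 + b \<cdot>\<^sub>v v2))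
      < (a \<cdot>\<^sub>v v1 + b \<cdot>\<^sub>v v2) \<bullet> (A *\<^sub>v (a \<cdot>\<^sub>v v1 + b \<cdot>\<^sub>v v2))"
  shows "c < lambda_k 2 A"
proof (rule ccontr)
  assume "\<not> c < lambda_k 2 A"
  obtain P D where P: "P \<in> carrier_mat n n" and PP: "transpose_mat P * P = 1\<^sub>m n"
    and PAP: "transpose_mat P * A * P = D" and diag: "diagonal_mat D"
    using real_symmetric_orthogonally_diagonalizable[OF A sym] by blast
  have D: "D \<in> carrier_mat n n" using PAP P A by auto
  from \<open>\<not> c < lambda_k 2 A\<close> have "lambda_k 2 A \<le> c" by simp
  then obtain i0 where i0: "\<And>i. i < n \<Longrightarrow> i \<noteq> i0 \<Longrightarrow> D $$ (i, i) \<le> c"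
    using all_but_one_eigenvalue_le[OF A P PP PAP diag] by blast
  \<comment> \<open>Choose the point of the plane orthogonal to the eigenvector of the possibly large eigenvalue.\<close>
  define \<alpha> where "\<alpha> = col P i0 \<bullet> v1"
  define \<beta> where "\<beta> = col P i0 \<bullet> v2"
  define a where "a = (if \<alpha> = 0 \<and> \<beta> = 0 then 1 else \<beta>)"
  define b where "b = (if \<alpha> = 0 \<and> \<beta> = 0 then 0 else - \<alpha>)"
  define x where "x = a \<cdot>\<^sub>v v1 + b \<cdot>\<^sub>v v2"
  have x: "x \<in> carrier_vec n" unfolding x_def using v1 v2 by simp
  let ?y = "transpose_mat P *\<^sub>v x"
  have "?y $ i0 = 0" if "i0 < n"
  proof -
    have p: "col P i0 \<in> carrier_vec n" using that P by simp
    have "?y $ i0 = col P i0 \<bullet> x" using that P x by simp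
    also have "\<dots> = col P i0 \<bullet> (a \<cdot>\<^sub>v v1) + col P i0 \<bullet> (b \<cdot>\<^sub>v v2)"
      unfolding x_def using p v1 v2 by (intro scalar_prod_add_distrib) auto
    also have "\<dots> = a * \<alpha> + b * \<beta>"
      unfolding \<alpha>_def \<beta>_def using p v1 v2 by simp
    finally show ?thesis by (simp add: a_def b_def)
  qed
  then have "?y \<bullet> (D *\<^sub>v ?y) \<le> c * (?y \<bullet> ?y)"
    using i0 P x by (intro diagonal_quadratic_form_le[OF D diag]) auto
  then have "x \<bullet> (A *\<^sub>v x) \<le> c * (x \<bullet> x)"
    using orthogonal_change_quadratic_form[OF A P PP PAP x] by simp
  moreover have "(a, b) \<noteq> (0, 0)" unfolding a_def b_def by auto
  ultimately show False using form_gt[of a b] unfolding x_def by simp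
qed

section \<open>Graph distances\<close>

lemma is_walk_single [simp]: "is_walk n E [x] u v \<longleftrightarrow> x < n \<and> u = x \<and> v = x"
  unfolding is_walk_def by auto

lemma is_walk_Cons_Cons [simp]:
  "is_walk n E (x # y # xs) u v \<longleftrightarrow> u = x \<and> x < n \<and> E x y \<and> is_walk n E (y # xs) y v"
proof -
  have "(\<forall>i. i + 1 < length (x # y # xs) \<longrightarrow> E ((x # y # xs) ! i) ((x # y # xs) ! (i + 1)))
    \<longleftrightarrow> E x y \<and> (\<forall>i. i + 1 < length (y # xs) \<longrightarrow> E ((y # xs) ! i) ((y # xs) ! (i + 1)))"
    by (auto simp: nth_Cons split: nat.splits)
  then show ?thesis unfolding is_walk_def by auto
qed

lemma is_walk_rev:
  assumes "simple_graph n E" and w: "is_walk n E xs u v"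
  shows "is_walk n E (rev xs) v u"
proof -
  have sym: "E a b \<Longrightarrow> E b a" for a b using assms(1) unfolding simple_graph_def by blast
  have edge: "E (xs ! i) (xs ! (i + 1))" if "i + 1 < length xs" for i
    using w that unfolding is_walk_def by blast
  have "E (rev xs ! i) (rev xs ! (i + 1))" if i: "i + 1 < length xs" for i
  proof -
    let ?j = "length xs - 2 - i"
    have "length xs - Suc i = ?j + 1" "length xs - Suc (i + 1) = ?j" using i by arith+
    then have "rev xs ! i = xs ! (?j + 1)" "rev xs ! (i + 1) = xs ! ?j"
      using i by (simp_all only: rev_nth)
    moreover have "E (xs ! ?j) (xs ! (?j + 1))" using i by (intro edge) linarith
    ultimately show ?thesis using sym by simp
  qed
  then show ?thesis using w unfolding is_walk_def by (auto simp: hd_rev last_rev)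
qed

lemma graph_dist_le_walk:
  assumes "is_walk n E xs u v"
  shows "graph_dist n E u v \<le> length xs - 1"
  unfolding graph_dist_def using assms by (intro Least_le exI[of _ xs]) (auto simp: is_walk_def)

lemma shortest_walk_exists:
  assumes "connected_graph n E" "u < n" "v < n"
  shows "\<exists>xs. is_walk n E xs u v \<and> length xs = graph_dist n E u v + 1"
proof -
  obtain xs where "is_walk n E xs u v" using assms unfolding connected_graph_def by blast
  then have "\<exists>d xs. is_walk n E xs u v \<and> length xs = d + 1"
    by (intro exI[of _ "length xs - 1"] exI[of _ xs]) (auto simp: is_walk_def)
  then show ?thesis unfolding graph_dist_def by (rule LeastI_ex)
qed

lemma graph_dist_sym:
  assumes "simple_graph n E" "connected_graph n E" "u < n" "v < n"
  shows "graph_dist n E u v = graph_dist n E v u"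
proof -
  have "graph_dist n E a b \<le> graph_dist n E b a" if ab: "a < n" "b < n" for a b
  proof -
    obtain xs where "is_walk n E xs b a" "length xs = graph_dist n E b a + 1"
      using shortest_walk_exists[OF assms(2) ab(2,1)] by blast
    then show ?thesis using graph_dist_le_walk[OF is_walk_rev[OF assms(1)]] by fastforce
  qed
  then show ?thesis using assms by (meson le_antisym)
qed

lemma graph_dist_self: "u < n \<Longrightarrow> graph_dist n E u u = 0"
  using graph_dist_le_walk[of n E "[u]" u u] by simp

lemma graph_dist_adjacent:
  assumes "simple_graph n E" "E u v"
  shows "graph_dist n E u v = 1"
proof -
  have uv: "u < n" "v < n" "u \<noteq> v" using assms unfolding simple_graph_def by blast+
  have walk: "is_walk n E [u, v] u v" using uv assms(2) by simp
  obtain xs where xs: "is_walk n E xs u v" "length xs = graph_dist n E u v + 1"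
    using LeastI_ex[of "\<lambda>d. \<exists>xs. is_walk n E xs u v \<and> length xs = d + 1"] walk
    unfolding graph_dist_def by fastforce
  have "graph_dist n E u v \<noteq> 0"
  proof
    assume "graph_dist n E u v = 0"
    then obtain a where "xs = [a]" using xs(2) by (cases xs) auto
    then show False using xs(1) uv by simp
  qed
  then show ?thesis using graph_dist_le_walk[OF walk] by simp
qed

lemma graph_dist_nonadjacent:
  assumes "connected_graph n E" "u < n" "v < n" "u \<noteq> v" "\<not> E u v"
  shows "2 \<le> graph_dist n E u v"
proof (rule ccontr)
  assume "\<not> 2 \<le> graph_dist n E u v"
  moreover obtain xs where w: "is_walk n E xs u v" and "length xs = graph_dist n E u v + 1"
    using shortest_walk_exists[OF assms(1-3)] by blast
  ultimately obtain a ys where "xs = a # ys" "length ys \<le> 1" by (cases xs) auto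
  then show False using w assms by (cases ys) auto
qed

lemma dist_matrix_symmetric:
  assumes "simple_graph n E" "connected_graph n E"
  shows "transpose_mat (dist_matrix n E) = dist_matrix n E"
  using graph_dist_sym[OF assms] by (intro eq_matI) (auto simp: dist_matrix_def)

lemma is_walk_map:
  assumes w: "is_walk k H xs i j" and into: "\<And>a. a < k \<Longrightarrow> f a < n"
    and hom: "\<And>a b. a < k \<Longrightarrow> b < k \<Longrightarrow> H a b \<Longrightarrow> E (f a) (f b)"
  shows "is_walk n E (map f xs) (f i) (f j)"
proof -
  have xs: "xs \<noteq> []" "set xs \<subseteq> {0..<k}" using w unfolding is_walk_def by auto
  have "E (f (xs ! a)) (f (xs ! (a + 1)))" if a: "a + 1 < length xs" for a
  proof (rule hom)
    have "xs ! a \<in> set xs" "xs ! (a + 1) \<in> set xs" using a by simp_all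
    then show "xs ! a < k" "xs ! (a + 1) < k" using xs(2) by auto
    show "H (xs ! a) (xs ! (a + 1))" using w a unfolding is_walk_def by blast
  qed
  then show ?thesis using w xs into unfolding is_walk_def by (auto simp: hd_map last_map)
qed

section \<open>Distances and quadratic forms on an induced copy\<close>

lemma sum_image_the_inv_into:
  assumes inj: "inj_on f K" and "f ` K \<subseteq> N" "finite N"
  shows "(\<Sum>p\<in>N. if p \<in> f ` K then G (the_inv_into K f p) p else 0) = (\<Sum>i\<in>K. G i (f i))"
proof -
  have "(\<Sum>p\<in>N. if p \<in> f ` K then G (the_inv_into K f p) p else 0)
      = (\<Sum>p\<in>f ` K. G (the_inv_into K f p) p)"
    using assms by (simp add: sum.If_cases Int_absorb1)
  also have "\<dots> = (\<Sum>i\<in>K. G i (f i))"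
    using inj by (simp add: sum.reindex the_inv_into_f_f)
  finally show ?thesis .
qed

lemma binary_quadratic_form_pos:
  fixes \<alpha> \<beta> \<gamma> a b :: real
  assumes "0 < \<alpha>" "\<beta>\<^sup>2 < \<alpha> * \<gamma>" "(a, b) \<noteq> (0, 0)"
  shows "0 < a\<^sup>2 * \<alpha> + 2 * a * b * \<beta> + b\<^sup>2 * \<gamma>"
proof -
  have "\<alpha> * (a\<^sup>2 * \<alpha> + 2 * a * b * \<beta> + b\<^sup>2 * \<gamma>)
      = (\<alpha> * a + \<beta> * b)\<^sup>2 + (\<alpha> * \<gamma> - \<beta>\<^sup>2) * b\<^sup>2"
    by (simp add: power2_eq_square algebra_simps)
  also have "\<dots> > 0"
  proof (cases "b = 0")
    case True
    then show ?thesis using assms by simp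
  next
    case False
    then show ?thesis using assms by (intro add_nonneg_pos) auto
  qed
  finally show ?thesis using assms(1) by (simp add: zero_less_mult_iff)
qed

lemma bilinear_form_lincomb:
  fixes M :: "nat \<Rightarrow> nat \<Rightarrow> real"
  assumes sym: "\<And>i j. i \<in> I \<Longrightarrow> j \<in> I \<Longrightarrow> M i j = M j i"
  shows "(\<Sum>i\<in>I. \<Sum>j\<in>I. (a * g i + b * h i) * (a * g j + b * h j) * M i j)
    = a\<^sup>2 * (\<Sum>i\<in>I. \<Sum>j\<in>I. g i * g j * M i j) + 2 * a * b * (\<Sum>i\<in>I. \<Sum>j\<in>I. g i * h j * M i j)
      + b\<^sup>2 * (\<Sum>i\<in>I. \<Sum>j\<in>I. h i * h j * M i j)"
proof -
  have "(\<Sum>i\<in>I. \<Sum>j\<in>I. h i * g j * M i j) = (\<Sum>i\<in>I. \<Sum>j\<in>I. g i * h j * M i j)"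
    by (subst sum.swap) (auto intro!: sum.cong simp: sym)
  moreover have "(\<Sum>i\<in>I. \<Sum>j\<in>I. (a * g i + b * h i) * (a * g j + b * h j) * M i j)
      = a\<^sup>2 * (\<Sum>i\<in>I. \<Sum>j\<in>I. g i * g j * M i j) + a * b * (\<Sum>i\<in>I. \<Sum>j\<in>I. g i * h j * M i j)
        + a * b * (\<Sum>i\<in>I. \<Sum>j\<in>I. h i * g j * M i j) + b\<^sup>2 * (\<Sum>i\<in>I. \<Sum>j\<in>I. h i * h j * M i j)"
    by (simp add: sum.distrib sum_distrib_left power2_eq_square algebra_simps)
  ultimately show ?thesis by simp
qed

locale induced_copy =
  fixes n :: nat and E :: "nat \<Rightarrow> nat \<Rightarrow> bool" and k :: nat and H :: "nat \<Rightarrow> nat \<Rightarrow> bool"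
    and f :: "nat \<Rightarrow> nat"
  assumes simple: "simple_graph n E" and connected: "connected_graph n E"
    and inj: "inj_on f {0..<k}" and into: "f ` {0..<k} \<subseteq> {0..<n}"
    and induced: "\<And>i j. i < k \<Longrightarrow> j < k \<Longrightarrow> E (f i) (f j) \<longleftrightarrow> H i j"

lemma induced_copy_if_induced_subgraph:
  assumes "simple_graph n E" "connected_graph n E" "induced_subgraph_of k H n E"
  obtains f where "induced_copy n E k H f"
  using assms unfolding induced_subgraph_of_def induced_copy_def by blast

context induced_copy
begin

lemma copy_less: "i < k \<Longrightarrow> f i < n"
  using into by (auto simp: image_subset_iff)

lemma dist_copy_self: "i < k \<Longrightarrow> graph_dist n E (f i) (f i) = 0"
  by (rule graph_dist_self) (rule copy_less)

lemma dist_copy_swap: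
  "j < i \<Longrightarrow> i < k \<Longrightarrow> graph_dist n E (f i) (f j) = graph_dist n E (f j) (f i)"
  by (rule graph_dist_sym[OF simple connected]) (simp_all add: copy_less)

lemma dist_copy_adjacent: "i < k \<Longrightarrow> j < k \<Longrightarrow> H i j \<Longrightarrow> graph_dist n E (f i) (f j) = 1"
  using graph_dist_adjacent[OF simple] induced by blast

lemmas dist_copy_simps = dist_copy_self dist_copy_swap dist_copy_adjacent

lemma dist_copy_le_walk: "is_walk k H xs i j \<Longrightarrow> graph_dist n E (f i) (f j) \<le> length xs - 1"
  using is_walk_map[of k H xs i j f n E] copy_less induced graph_dist_le_walk by fastforce

lemma dist_copy_nonadjacent:
  assumes "i < k" "j < k" "i \<noteq> j" "\<not> H i j"
  shows "2 \<le> graph_dist n E (f i) (f j)"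
  using assms inj induced copy_less
  by (intro graph_dist_nonadjacent[OF connected]) (auto dest: inj_onD)

lemma dist_copy_between:
  assumes "is_walk k H xs i j" "i \<noteq> j" "\<not> H i j"
  shows "graph_dist n E (f i) (f j) \<in> {2..length xs - 1}"
proof -
  have "i \<in> set xs" "j \<in> set xs" using assms(1) unfolding is_walk_def by auto
  then have "i < k" "j < k" using assms(1) unfolding is_walk_def by auto
  then show ?thesis using assms dist_copy_nonadjacent dist_copy_le_walk by simp
qed

lemma dist_copy_common_neighbour:
  assumes "i < k" "m < k" "j < k" "H i m" "H m j" "i \<noteq> j" "\<not> H i j"
  shows "graph_dist n E (f i) (f j) = 2"
  using dist_copy_between[of "[i, m, j]" i j] assms by simp

definition copy_vec :: "(nat \<Rightarrow> real) \<Rightarrow> real vec" where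
  "copy_vec h = vec n (\<lambda>p. if p \<in> f ` {0..<k} then h (the_inv_into {0..<k} f p) else 0)"

lemma copy_vec_carrier: "copy_vec h \<in> carrier_vec n"
  unfolding copy_vec_def by simp

lemma copy_vec_lincomb: "a \<cdot>\<^sub>v copy_vec g + b \<cdot>\<^sub>v copy_vec h = copy_vec (\<lambda>i. a * g i + b * h i)"
  by (rule eq_vecI) (auto simp: copy_vec_def)

lemma copy_vec_index: "i < k \<Longrightarrow> copy_vec h $ f i = h i"
  unfolding copy_vec_def using copy_less inj by (simp add: the_inv_into_f_f)

lemma copy_vec_scalar_prod:
  assumes "v \<in> carrier_vec n"
  shows "copy_vec h \<bullet> v = (\<Sum>i<k. h i * v $ f i)"
proof -
  have "copy_vec h \<bullet> v
      = (\<Sum>p\<in>{0..<n}. if p \<in> f ` {0..<k} then h (the_inv_into {0..<k} f p) * v $ p else 0)"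
    unfolding scalar_prod_def copy_vec_def using assms by (intro sum.cong) auto
  also have "\<dots> = (\<Sum>i<k. h i * v $ f i)"
    using sum_image_the_inv_into[OF inj into] by (simp add: atLeast0LessThan)
  finally show ?thesis .
qed

lemma copy_vec_norm: "copy_vec h \<bullet> copy_vec h = (\<Sum>i<k. h i * h i)"
  by (simp add: copy_vec_scalar_prod copy_vec_carrier copy_vec_index)

lemma copy_vec_dist_form:
  "copy_vec h \<bullet> (dist_matrix n E *\<^sub>v copy_vec h)
    = (\<Sum>i<k. \<Sum>j<k. h i * h j * real (graph_dist n E (f i) (f j)))"
proof -
  have row: "(dist_matrix n E *\<^sub>v copy_vec h) $ f i = (\<Sum>j<k. h j * real (graph_dist n E (f i) (f j)))"
    if "i < k" for i
  proof -
    have "(dist_matrix n E *\<^sub>v copy_vec h) $ f i = copy_vec h \<bullet> row (dist_matrix n E) (f i)"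
      using copy_less[OF that] copy_vec_carrier
      by (simp add: dist_matrix_def comm_scalar_prod[of _ n])
    also have "\<dots> = (\<Sum>j<k. h j * real (graph_dist n E (f i) (f j)))"
      using copy_less[OF that] copy_less
      by (simp add: copy_vec_scalar_prod dist_matrix_def)
    finally show ?thesis .
  qed
  have "copy_vec h \<bullet> (dist_matrix n E *\<^sub>v copy_vec h) = (\<Sum>i<k. h i * (dist_matrix n E *\<^sub>v copy_vec h) $ f i)"
    by (rule copy_vec_scalar_prod, rule mult_mat_vec_carrier[of _ n n]) (simp_all add: dist_matrix_def copy_vec_carrier)
  also have "\<dots> = (\<Sum>i<k. h i * (\<Sum>j<k. h j * real (graph_dist n E (f i) (f j))))"
    by (intro sum.cong) (simp_all add: row)
  finally show ?thesis by (simp add: sum_distrib_left mult.assoc)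
qed

text \<open>The bilinear form of q D + p I at the vectors u and w placed on the copy of H, where D is
  the distance matrix of G; integer coefficients make certificates checkable by evaluation.\<close>

definition scaled_dist_form :: "int \<Rightarrow> int \<Rightarrow> int list \<Rightarrow> int list \<Rightarrow> int" where
  "scaled_dist_form p q u w = (\<Sum>i<k. \<Sum>j<k.
     u ! i * w ! j * (q * int (graph_dist n E (f i) (f j)) + (if i = j then p else 0)))"

lemma scaled_dist_form_plane:
  fixes a b :: real and u w :: "int list"
  defines "x \<equiv> a \<cdot>\<^sub>v copy_vec (\<lambda>i. of_int (u ! i)) + b \<cdot>\<^sub>v copy_vec (\<lambda>i. of_int (w ! i))"
  shows "of_int q * (x \<bullet> (dist_matrix n E *\<^sub>v x)) + of_int p * (x \<bullet> x)
    = a\<^sup>2 * of_int (scaled_dist_form p q u u) + 2 * a * b * of_int (scaled_dist_form p q u w)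
      + b\<^sup>2 * of_int (scaled_dist_form p q w w)"
proof -
  define M where "M i j = of_int q * real (graph_dist n E (f i) (f j)) + (if i = j then of_int p else 0)"
    for i j
  define B where "B g h = (\<Sum>i<k. \<Sum>j<k. g i * h j * M i j)" for g h
  let ?u = "\<lambda>i. of_int (u ! i) :: real" and ?w = "\<lambda>i. of_int (w ! i) :: real"
  let ?h = "\<lambda>i. a * ?u i + b * ?w i"
  have x: "x = copy_vec ?h" unfolding x_def copy_vec_lincomb ..
  have "B ?h ?h = (\<Sum>i<k. \<Sum>j<k. of_int q * (?h i * ?h j * real (graph_dist n E (f i) (f j))))
      + (\<Sum>i<k. \<Sum>j<k. if i = j then of_int p * (?h i * ?h j) else 0)"
    unfolding B_def M_def sum.distrib[symmetric] by (intro sum.cong refl) (simp add: algebra_simps)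
  also have "\<dots> = of_int q * (x \<bullet> (dist_matrix n E *\<^sub>v x)) + of_int p * (x \<bullet> x)"
    unfolding x copy_vec_dist_form copy_vec_norm by (simp add: sum_distrib_left)
  finally have B_vec: "B ?h ?h = of_int q * (x \<bullet> (dist_matrix n E *\<^sub>v x)) + of_int p * (x \<bullet> x)" .
  have M_sym: "M i j = M j i" if "i < k" "j < k" for i j
    using graph_dist_sym[OF simple connected] copy_less that by (simp add: M_def)
  have B_int: "B (\<lambda>i. of_int (y ! i)) (\<lambda>i. of_int (z ! i)) = of_int (scaled_dist_form p q y z)"
    for y z unfolding B_def M_def scaled_dist_form_def by simp (intro sum.cong refl, simp)
  have "B ?h ?h = a\<^sup>2 * B ?u ?u + 2 * a * b * B ?u ?w + b\<^sup>2 * B ?w ?w"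
    unfolding B_def by (rule bilinear_form_lincomb) (simp add: M_sym)
  then show ?thesis unfolding B_vec B_int .
qed

theorem lambda2_gt_if_certificate:
  assumes c: "c \<le> - of_int p / of_int q" and q: "0 < q" and uu: "0 < scaled_dist_form p q u u"
    and uw: "(scaled_dist_form p q u w)\<^sup>2 < scaled_dist_form p q u u * scaled_dist_form p q w w"
  shows "c < lambda_k 2 (dist_matrix n E)"
proof -
  have "- of_int p / of_int q < lambda_k 2 (dist_matrix n E)"
  proof (rule lambda2_gt_if_plane_form_gt)
    show "dist_matrix n E \<in> carrier_mat n n" by (simp add: dist_matrix_def)
    show "transpose_mat (dist_matrix n E) = dist_matrix n E"
      by (rule dist_matrix_symmetric[OF simple connected])
    fix a b :: real assume ab: "(a, b) \<noteq> (0, 0)"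
    let ?x = "a \<cdot>\<^sub>v copy_vec (\<lambda>i. of_int (u ! i)) + b \<cdot>\<^sub>v copy_vec (\<lambda>i. of_int (w ! i))"
    have "0 < real_of_int (scaled_dist_form p q u u)" using uu by simp
    moreover have "(real_of_int (scaled_dist_form p q u w))\<^sup>2
        < real_of_int (scaled_dist_form p q u u) * real_of_int (scaled_dist_form p q w w)"
      using uw by (simp flip: of_int_power of_int_mult)
    ultimately have "0 < of_int q * (?x \<bullet> (dist_matrix n E *\<^sub>v ?x)) + of_int p * (?x \<bullet> ?x)"
      unfolding scaled_dist_form_plane by (rule binary_quadratic_form_pos[OF _ _ ab])
    then have "of_int q * (- of_int p / of_int q * (?x \<bullet> ?x)) < of_int q * (?x \<bullet> (dist_matrix n E *\<^sub>v ?x))"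
      using q by simp
    moreover have "0 < real_of_int q" using q by simp
    ultimately show "- of_int p / of_int q * (?x \<bullet> ?x) < ?x \<bullet> (dist_matrix n E *\<^sub>v ?x)"
      using mult_less_cancel_left_pos by blast
  qed (rule copy_vec_carrier)+
  then show ?thesis using c by simp
qed

end

section \<open>The forbidden induced subgraphs\<close>

text \<open>The certificate vectors u and w were found numerically; only their exact check matters.\<close>

lemma lambda2_gt_if_induced_C4:
  assumes "simple_graph n E" "connected_graph n E" "induced_subgraph_of 4 C4 n E"
  shows "-569/1000 < lambda_k 2 (dist_matrix n E)"
proof -
  obtain f where "induced_copy n E 4 C4 f" using induced_copy_if_induced_subgraph[OF assms] .
  then interpret induced_copy n E 4 C4 f .
  note simps = scaled_dist_form_def lessThan_nat_numeral dist_copy_simps C4_def edges_of_def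
    dist_copy_common_neighbour[of 0 1 2] dist_copy_common_neighbour[of 1 0 3]
  show ?thesis
    by (rule lambda2_gt_if_certificate[where p = 569 and q = 1000 and u = "[1,1,1,1]" and w = "[-1,1,-1,1]"])
      (simp_all add: simps flip: One_nat_def)
qed

lemma lambda2_gt_if_induced_C5:
  assumes "simple_graph n E" "connected_graph n E" "induced_subgraph_of 5 C5 n E"
  shows "-569/1000 < lambda_k 2 (dist_matrix n E)"
proof -
  obtain f where "induced_copy n E 5 C5 f" using induced_copy_if_induced_subgraph[OF assms] .
  then interpret induced_copy n E 5 C5 f .
  note simps = scaled_dist_form_def lessThan_nat_numeral dist_copy_simps C5_def edges_of_def
    dist_copy_common_neighbour[of 0 1 2] dist_copy_common_neighbour[of 0 4 3]
    dist_copy_common_neighbour[of 1 2 3] dist_copy_common_neighbour[of 1 0 4]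
    dist_copy_common_neighbour[of 2 3 4]
  show ?thesis
    by (rule lambda2_gt_if_certificate[where p = 569 and q = 1000 and u = "[1,1,1,1,1]" and w = "[-1,1,-1,0,1]"])
      (simp_all add: simps flip: One_nat_def)
qed

lemma lambda2_gt_if_induced_P5:
  assumes "simple_graph n E" "connected_graph n E" "induced_subgraph_of 5 P5 n E"
  shows "-569/1000 < lambda_k 2 (dist_matrix n E)"
proof -
  obtain f where "induced_copy n E 5 P5 f" using induced_copy_if_induced_subgraph[OF assms] .
  then interpret induced_copy n E 5 P5 f .
  note simps = scaled_dist_form_def lessThan_nat_numeral dist_copy_simps P5_def edges_of_def
    dist_copy_common_neighbour[of 0 1 2] dist_copy_common_neighbour[of 1 2 3]
    dist_copy_common_neighbour[of 2 3 4]
  have "graph_dist n E (f 0) (f 3) = 2 \<or> graph_dist n E (f 0) (f 3) = 3"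
    using dist_copy_between[of "[0, 1, 2, 3]" 0 3] by (auto simp: P5_def edges_of_def)
  moreover have "graph_dist n E (f 1) (f 4) = 2 \<or> graph_dist n E (f 1) (f 4) = 3"
    using dist_copy_between[of "[1, 2, 3, 4]" 1 4] by (auto simp: P5_def edges_of_def)
  moreover have "graph_dist n E (f 0) (f 4) \<in> {2, 3, 4}"
    using dist_copy_between[of "[0, 1, 2, 3, 4]" 0 4] by (auto simp: P5_def edges_of_def)
  \<comment> \<open>No single certificate covers all these distance patterns.\<close>
  ultimately consider (d03) "graph_dist n E (f 0) (f 3) = 2" | (d14) "graph_dist n E (f 1) (f 4) = 2"
    | (near) "graph_dist n E (f 0) (f 3) = 3" "graph_dist n E (f 1) (f 4) = 3"
        "graph_dist n E (f 0) (f 4) = 2 \<or> graph_dist n E (f 0) (f 4) = 3"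
    | (isometric) "graph_dist n E (f 0) (f 3) = 3" "graph_dist n E (f 1) (f 4) = 3"
        "graph_dist n E (f 0) (f 4) = 4"
    by auto
  then show ?thesis
  proof cases
    case d03
    show ?thesis
      by (rule lambda2_gt_if_certificate[where p = 569 and q = 1000 and u = "[-1,-2,0,-1,0]" and w = "[-1,0,-1,0,0]"])
        (simp_all add: d03 simps flip: One_nat_def)
  next
    case d14
    show ?thesis
      by (rule lambda2_gt_if_certificate[where p = 569 and q = 1000 and u = "[0,-3,0,-1,-1]" and w = "[0,0,-1,1,-1]"])
        (simp_all add: d14 simps flip: One_nat_def)
  next
    case near
    show ?thesis
      by (insert near(3), elim disjE;
          rule lambda2_gt_if_certificate[where p = 569 and q = 1000 and u = "[1,-1,0,1,-1]" and w = "[-1,0,-1,-1,0]"];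
          simp add: near(1,2) simps flip: One_nat_def)
  next
    case isometric
    show ?thesis
      by (rule lambda2_gt_if_certificate[where p = 569 and q = 1000 and u = "[-2,0,-1,0,0]" and w = "[-1,3,-4,3,-1]"])
        (simp_all add: isometric simps flip: One_nat_def)
  qed
qed

lemma lambda2_gt_if_induced_H1:
  assumes "simple_graph n E" "connected_graph n E" "induced_subgraph_of 4 H1 n E"
  shows "-569/1000 < lambda_k 2 (dist_matrix n E)"
proof -
  obtain f where "induced_copy n E 4 H1 f" using induced_copy_if_induced_subgraph[OF assms] .
  then interpret induced_copy n E 4 H1 f .
  note simps = scaled_dist_form_def lessThan_nat_numeral dist_copy_simps H1_def edges_of_def
    dist_copy_common_neighbour[of 1 0 3]
  show ?thesis
    by (rule lambda2_gt_if_certificate[where p = 569 and q = 1000 and u = "[1,1,1,1]" and w = "[1,-1,1,-1]"])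
      (simp_all add: simps flip: One_nat_def)
qed

lemma lambda2_gt_if_induced_H2:
  assumes "simple_graph n E" "connected_graph n E" "induced_subgraph_of 5 H2 n E"
  shows "-569/1000 < lambda_k 2 (dist_matrix n E)"
proof -
  obtain f where "induced_copy n E 5 H2 f" using induced_copy_if_induced_subgraph[OF assms] .
  then interpret induced_copy n E 5 H2 f .
  note simps = scaled_dist_form_def lessThan_nat_numeral dist_copy_simps H2_def edges_of_def
    dist_copy_common_neighbour[of 0 1 2] dist_copy_common_neighbour[of 0 1 4]
    dist_copy_common_neighbour[of 1 2 3] dist_copy_common_neighbour[of 2 1 4]
  have "graph_dist n E (f 0) (f 3) = 2 \<or> graph_dist n E (f 0) (f 3) = 3"
    using dist_copy_between[of "[0, 1, 2, 3]" 0 3] by (auto simp: H2_def edges_of_def)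
  moreover have "graph_dist n E (f 3) (f 4) = 2 \<or> graph_dist n E (f 3) (f 4) = 3"
    using dist_copy_between[of "[3, 2, 1, 4]" 3 4] by (auto simp: H2_def edges_of_def)
  ultimately show ?thesis
    by - (elim disjE; rule lambda2_gt_if_certificate[where p = 569 and q = 1000 and u = "[2,1,2,2,2]" and w = "[1,-3,2,-1,1]"];
      simp add: simps flip: One_nat_def)
qed

lemma lambda2_gt_if_induced_H3:
  assumes "simple_graph n E" "connected_graph n E" "induced_subgraph_of 5 H3 n E"
  shows "-569/1000 < lambda_k 2 (dist_matrix n E)"
proof -
  obtain f where "induced_copy n E 5 H3 f" using induced_copy_if_induced_subgraph[OF assms] .
  then interpret induced_copy n E 5 H3 f .
  note simps = scaled_dist_form_def lessThan_nat_numeral dist_copy_simps H3_def edges_of_def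
    dist_copy_common_neighbour[of 0 1 2] dist_copy_common_neighbour[of 1 2 3]
    dist_copy_common_neighbour[of 2 1 4]
  have "graph_dist n E (f 0) (f 3) = 2 \<or> graph_dist n E (f 0) (f 3) = 3"
    using dist_copy_between[of "[0, 1, 2, 3]" 0 3] by (auto simp: H3_def edges_of_def)
  moreover have "graph_dist n E (f 3) (f 4) = 2 \<or> graph_dist n E (f 3) (f 4) = 3"
    using dist_copy_between[of "[3, 2, 1, 4]" 3 4] by (auto simp: H3_def edges_of_def)
  ultimately show ?thesis
    by - (elim disjE; rule lambda2_gt_if_certificate[where p = 569 and q = 1000 and u = "[4,0,1,-7,-12]" and w = "[-1,16,-14,2,-11]"];
      simp add: simps flip: One_nat_def)
qed

theorem lemma2p5:
  fixes n :: nat and E :: "nat \<Rightarrow> nat \<Rightarrow> bool"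
  assumes "simple_graph n E" and "connected_graph n E"
    and "lambda_k 2 (dist_matrix n E) \<le> (17 - sqrt 329) / 2"
  shows "\<not> induced_subgraph_of 4 C4 n E \<and> \<not> induced_subgraph_of 5 C5 n E
    \<and> \<not> induced_subgraph_of 5 P5 n E \<and> \<not> induced_subgraph_of 4 H1 n E
    \<and> \<not> induced_subgraph_of 5 H2 n E \<and> \<not> induced_subgraph_of 5 H3 n E"
proof -
  have "18138 / 1000 \<le> sqrt (329 :: real)" by (rule real_le_rsqrt) (simp add: power2_eq_square)
  then have "(17 - sqrt 329) / 2 \<le> (-569/1000 :: real)" by simp
  then have "lambda_k 2 (dist_matrix n E) \<le> -569/1000" using assms(3) by linarith
  then show ?thesis
    using lambda2_gt_if_induced_C4[OF assms(1,2)] lambda2_gt_if_induced_C5[OF assms(1,2)]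
      lambda2_gt_if_induced_P5[OF assms(1,2)] lambda2_gt_if_induced_H1[OF assms(1,2)]
      lambda2_gt_if_induced_H2[OF assms(1,2)] lambda2_gt_if_induced_H3[OF assms(1,2)]
    by fastforce
qed

end
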